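(* Let $\Psi_{\text{pt}}$ and $\Psi_{\text{tg}}$ be two $L$-layer Kolmogorov--Arnold networks (KANs) with the same widths $n_1,\dots,n_{L+1}$ and the same basis functions $b_1,\dots,b_{n_d}$, with parameter tensors $\{\mathcal{A}_{\ell,\text{pt}}\}_{\ell\in[L]}$ and $\{\mathcal{A}_{\ell,\text{tg}}\}_{\ell\in[L]}$ respectively, $\mathcal{A}_{\ell,\cdot}\in\mathbb{R}^{n_\ell\times n_{\ell+1}\times n_d}$. Assume that each basis function $b_k:\mathbb{R}\to\mathbb{R}$ is smooth, satisfies $|b_k(z)|\le B$ for all $z$, and is Lipschitz with constant $L_b>0$, and that $\|\mathcal{A}_{\ell,\text{tg}}\|_F\le M$ and $\|\mathcal{A}_{\ell,\text{pt}}\|_F\le M$ for all $\ell\in[L]$, with $B,M>0$. Fix integers $1\le r_{\ell,1}\le n_\ell$, $1\le r_{\ell,2}\le n_{\ell+1}$, $1\le r_{\ell,3}\le n_d$ for each $\ell\in[L]$. Then there exist core tensors $\mathcal{G}_\ell\in\mathbb{R}^{r_{\ell,1}\times r_{\ell,2}\times r_{\ell,3}}$ and matrices $\bm{U}_\ell^{(1)}\in\mathbb{R}^{n_\ell\times r_{\ell,1}}$, $\bm{U}_\ell^{(2)}\in\mathbb{R}^{n_{\ell+1}\times r_{\ell,2}}$, $\bm{U}_\ell^{(3)}\in\mathbb{R}^{n_d\times r_{\ell,3}}$, $\ell\in[L]$, such that the KAN $\Psi_{\text{ft}}$ with parameter tensors $$\mathcal{A}_{\ell,\text{ft}}=\mathcal{A}_{\ell,\text{pt}}+\mathcal{G}_\ell\times_1\bm{U}_\ell^{(1)}\times_2\bm{U}_\ell^{(2)}\times_3\bm{U}_\ell^{(3)},\quad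 \ell\in[L],$$ satisfies, for every $\bm{x}\in\mathbb{R}^{n_1}$, $$\|\Psi_{\text{ft}}(\bm{x})-\Psi_{\text{tg}}(\bm{x})\|_2\le\sum_{\ell=1}^{L}C_\ell\Big(\sum_{r=r_{\ell,1}+1}^{n_\ell}\sigma_r(\bm{E}_\ell^{(1)})^2+\sum_{r=r_{\ell,2}+1}^{n_{\ell+1}}\sigma_r(\bm{E}_\ell^{(2)})^2+\sum_{r=r_{\ell,3}+1}^{n_d}\sigma_r(\bm{E}_\ell^{(3)})^2\Big)^{1/2},$$ where $C_\ell:=(M L_b\sqrt{n_d})^{L-\ell}\cdot B\sqrt{n_\ell n_d}$.
   Context: A KAN of depth $L$ with widths $n_1,\dots,n_{L+1}$, basis functions $b_1,\dots,b_{n_d}:\mathbb{R}\to\mathbb{R}$ and parameter tensors $\mathcal{A}_\ell=(a_{\ell,p,q,k})\in\mathbb{R}^{n_\ell\times n_{\ell+1}\times n_d}$ is the map $\Psi:\mathbb{R}^{n_1}\to\mathbb{R}^{n_{L+1}}$, $\Psi(\bm{x})=\bm{z}_{L+1}$, where $\bm{z}_1=\bm{x}$ and $z_{\ell+1,q}=\sum_{p=1}^{n_\ell}\sum_{k=1}^{n_d}a_{\ell,p,q,k}\,b_k(z_{\ell,p})$ for $q\in[n_{\ell+1}]$, $\ell\in[L]$. The mode products are defined by $(\mathcal{G}\times_1\bm{U}^{(1)}\times_2\bm{U}^{(2)}\times_3\bm{U}^{(3)})_{i,j,k}=\sum_{a,b,c}g_{a,b,c}U^{(1)}_{i,a}U^{(2)}_{j,b}U^{(3)}_{k,c}$.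 The error tensor is $\mathcal{E}_\ell=\mathcal{A}_{\ell,\text{tg}}-\mathcal{A}_{\ell,\text{pt}}$, and $\bm{E}_\ell^{(1)}\in\mathbb{R}^{n_\ell\times n_{\ell+1}n_d}$, $\bm{E}_\ell^{(2)}\in\mathbb{R}^{n_{\ell+1}\times n_\ell n_d}$, $\bm{E}_\ell^{(3)}\in\mathbb{R}^{n_d\times n_\ell n_{\ell+1}}$ are its mode-$i$ unfoldings (the matrix whose columns are the mode-$i$ fibers of $\mathcal{E}_\ell$). $\sigma_r(\cdot)$ denotes the $r$-th largest singular value (taken to be $0$ if $r$ exceeds the number of singular values). *)

theory Defs
  imports "HOL-Analysis.Lipschitz" "Jordan_Normal_Form.Char_Poly" "HOL-Library.Multiset"
begin

definition smooth_fun :: "(real \<Rightarrow> real) \<Rightarrow> bool" where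
  "smooth_fun f \<longleftrightarrow> (\<forall>k x. (deriv ^^ k) f differentiable (at x))"

text \<open>Singular values of a real matrix A: square roots of the eigenvalues (with multiplicity)
  of A * A^T, sorted decreasingly; sigma_r is 1-based and 0 beyond the number of values.\<close>
definition sing_vals :: "real mat \<Rightarrow> real list" where
  "sing_vals A = map sqrt (rev (sorted_list_of_multiset (proots (char_poly (A * transpose_mat A)))))"

definition sigma :: "nat \<Rightarrow> real mat \<Rightarrow> real" where
  "sigma r A = (if 1 \<le> r \<and> r \<le> length (sing_vals A) then sing_vals A ! (r - 1) else 0)"

text \<open>Tensors: 3-way arrays as functions with 0-based indices; layers are 1-based.
  n :: nat \<Rightarrow> nat gives widths n 1, ..., n (L+1); nd is the number of basis functions,
  b k for k < nd are the basis functions.\<close>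

definition kan_layer :: "(nat \<Rightarrow> real \<Rightarrow> real) \<Rightarrow> nat \<Rightarrow> nat \<Rightarrow> (nat \<Rightarrow> nat \<Rightarrow> nat \<Rightarrow> real)
    \<Rightarrow> (nat \<Rightarrow> real) \<Rightarrow> (nat \<Rightarrow> real)" where
  "kan_layer b nd nl Al z = (\<lambda>q. \<Sum>p<nl. \<Sum>k<nd. Al p q k * b k (z p))"

text \<open>kan_z b nd n A x j is z_{j+1}.\<close>
primrec kan_z :: "(nat \<Rightarrow> real \<Rightarrow> real) \<Rightarrow> nat \<Rightarrow> (nat \<Rightarrow> nat) \<Rightarrow> (nat \<Rightarrow> nat \<Rightarrow> nat \<Rightarrow> nat \<Rightarrow> real)
    \<Rightarrow> (nat \<Rightarrow> real) \<Rightarrow> nat \<Rightarrow> (nat \<Rightarrow> real)" where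
  "kan_z b nd n A x 0 = x"
| "kan_z b nd n A x (Suc j) = kan_layer b nd (n (Suc j)) (A (Suc j)) (kan_z b nd n A x j)"

definition kan :: "nat \<Rightarrow> (nat \<Rightarrow> real \<Rightarrow> real) \<Rightarrow> nat \<Rightarrow> (nat \<Rightarrow> nat) \<Rightarrow> (nat \<Rightarrow> nat \<Rightarrow> nat \<Rightarrow> nat \<Rightarrow> real)
    \<Rightarrow> (nat \<Rightarrow> real) \<Rightarrow> (nat \<Rightarrow> real)" where
  "kan L b nd n A x = kan_z b nd n A x L"

definition vnorm2 :: "nat \<Rightarrow> (nat \<Rightarrow> real) \<Rightarrow> real" where
  "vnorm2 m v = sqrt (\<Sum>i<m. (v i)\<^sup>2)"

definition frob3 :: "nat \<Rightarrow> nat \<Rightarrow> nat \<Rightarrow> (nat \<Rightarrow> nat \<Rightarrow> nat \<Rightarrow> real) \<Rightarrow> real" where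
  "frob3 d1 d2 d3 T = sqrt (\<Sum>i<d1. \<Sum>j<d2. \<Sum>k<d3. (T i j k)\<^sup>2)"

definition tucker :: "nat \<Rightarrow> nat \<Rightarrow> nat \<Rightarrow> (nat \<Rightarrow> nat \<Rightarrow> nat \<Rightarrow> real)
    \<Rightarrow> (nat \<Rightarrow> nat \<Rightarrow> real) \<Rightarrow> (nat \<Rightarrow> nat \<Rightarrow> real) \<Rightarrow> (nat \<Rightarrow> nat \<Rightarrow> real)
    \<Rightarrow> (nat \<Rightarrow> nat \<Rightarrow> nat \<Rightarrow> real)" where
  "tucker r1 r2 r3 G U1 U2 U3 = (\<lambda>i j k. \<Sum>a<r1. \<Sum>b<r2. \<Sum>c<r3. G a b c * U1 i a * U2 j b * U3 k c)"

definition unfold1 :: "nat \<Rightarrow> nat \<Rightarrow> nat \<Rightarrow> (nat \<Rightarrow> nat \<Rightarrow> nat \<Rightarrow> real) \<Rightarrow> real mat" where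
  "unfold1 d1 d2 d3 T = mat d1 (d2 * d3) (\<lambda>(i, c). T i (c div d3) (c mod d3))"
definition unfold2 :: "nat \<Rightarrow> nat \<Rightarrow> nat \<Rightarrow> (nat \<Rightarrow> nat \<Rightarrow> nat \<Rightarrow> real) \<Rightarrow> real mat" where
  "unfold2 d1 d2 d3 T = mat d2 (d1 * d3) (\<lambda>(j, c). T (c div d3) j (c mod d3))"
definition unfold3 :: "nat \<Rightarrow> nat \<Rightarrow> nat \<Rightarrow> (nat \<Rightarrow> nat \<Rightarrow> nat \<Rightarrow> real) \<Rightarrow> real mat" where
  "unfold3 d1 d2 d3 T = mat d3 (d1 * d2) (\<lambda>(k, c). T (c div d2) (c mod d2) k)"

end

(*
  Write E_l for the error tensor A_l,tg - A_l,pt. Two estimates are combined.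

  A layer z |-> (sum_p sum_k a_pqk b_k(z_p))_q is B sqrt(n_l n_d)-Lipschitz in its coefficient
  tensor, because the features b_k(z_p) are bounded by B, and M L_b sqrt(n_d)-Lipschitz in its
  input when its coefficients have Frobenius norm at most M. Replacing the layers of the target
  network by the fine-tuned ones one at a time and telescoping gives
  |Psi_ft(x) - Psi_tg(x)| <= sum_l C_l |A_l,ft - A_l,tg|_F.

  For the layer update take the truncated HOSVD of E_l: with P_i the orthogonal projector onto
  the leading r_l,i left singular vectors of the mode-i unfolding, P_1 P_2 P_3 E_l is a Tucker
  tensor of the required multilinear rank and A_l,ft - A_l,tg = P_1 P_2 P_3 E_l - E_l. This
  residual splits into three mutually orthogonal pieces, so its squared norm is at most
  sum_i |E_l - P_i E_l|^2, and each |E_l - P_i E_l|^2 is a tail sum of squared singular values;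
  the singular vectors come from an orthogonal Schur decomposition of the symmetric matrix
  E^(i) E^(i)^T with decreasingly ordered eigenvalues.
*)

theory Submission
  imports Defs "Jordan_Normal_Form.Schur_Decomposition" "HOL-Library.Function_Algebras" "HOL-Analysis.L2_Norm"
begin

unbundle no inner_syntax and no vec_syntax

section \<open>Orthonormal matrices and the real Schur decomposition\<close>

definition orthonormal_mat :: "nat \<Rightarrow> real mat \<Rightarrow> bool" where
  "orthonormal_mat n P \<longleftrightarrow> P \<in> carrier_mat n n \<and> transpose_mat P * P = 1\<^sub>m n"

lemma orthonormal_matD:
  assumes "orthonormal_mat n P"
  shows orthonormal_mat_carrier: "P \<in> carrier_mat n n"
    and orthonormal_mat_left_inverse: "transpose_mat P * P = 1\<^sub>m n"
    and orthonormal_mat_right_inverse: "P * transpose_mat P = 1\<^sub>m n"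
  using assms mat_mult_left_right_inverse[of "transpose_mat P" n P] by (auto simp: orthonormal_mat_def)

lemma orthonormal_mat_mult:
  assumes P: "orthonormal_mat n P" and Q: "orthonormal_mat n Q"
  shows "orthonormal_mat n (P * Q)"
proof -
  note carr = orthonormal_mat_carrier[OF P] orthonormal_mat_carrier[OF Q]
  have "transpose_mat (P * Q) * (P * Q) = transpose_mat Q * (transpose_mat P * P) * Q"
    using carr by (simp add: transpose_mult[of P n n Q n] assoc_mult_mat[of _ n n _ n _ n])
  then show ?thesis
    using carr orthonormal_mat_left_inverse[OF P] orthonormal_mat_left_inverse[OF Q]
    by (simp add: orthonormal_mat_def)
qed

lemma orthonormal_mat_block:
  assumes P: "orthonormal_mat m P"
  shows "orthonormal_mat (Suc m) (four_block_mat (1\<^sub>m 1) (0\<^sub>m 1 m) (0\<^sub>m m 1) P)"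
proof -
  have carr: "P \<in> carrier_mat m m" by (rule orthonormal_mat_carrier[OF P])
  have "transpose_mat (four_block_mat (1\<^sub>m 1) (0\<^sub>m 1 m) (0\<^sub>m m 1) P) * four_block_mat (1\<^sub>m 1) (0\<^sub>m 1 m) (0\<^sub>m m 1) P
      = four_block_mat (1\<^sub>m 1) (0\<^sub>m 1 m) (0\<^sub>m m 1) (transpose_mat P * P)"
    using carr by (simp add: transpose_four_block_mat[of _ 1 1 _ m _ m] mult_four_block_mat[of _ 1 1 _ m _ m _ _ 1 _ m])
  then show ?thesis
    using carr orthonormal_mat_left_inverse[OF P] by (auto simp: orthonormal_mat_def)
qed

lemma real_cscalar_prod [simp]: "(v :: real vec) \<bullet>c w = v \<bullet> w"
  by (simp add: scalar_prod_def)

lemma orthonormal_mat_of_corthogonal: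
  assumes ws: "set ws \<subseteq> carrier_vec n" "corthogonal ws" "length ws = n"
  shows "orthonormal_mat n (mat_of_cols n (map (\<lambda>w. (1 / sqrt (w \<bullet> w)) \<cdot>\<^sub>v w) ws))"
    (is "orthonormal_mat n ?W")
proof -
  have ortho: "ws ! i \<bullet> ws ! j = 0 \<longleftrightarrow> i \<noteq> j" if "i < n" "j < n" for i j
    using corthogonalD[OF ws(2)] ws(3) that by simp
  have pos: "ws ! i \<bullet> ws ! i > 0" if "i < n" for i
  proof -
    have "ws ! i \<bullet> ws ! i \<ge> 0" unfolding scalar_prod_def by (auto intro: sum_nonneg)
    then show ?thesis using ortho[OF that that] by simp
  qed
  have carr: "ws ! i \<in> carrier_vec n" if "i < n" for i
    using ws(1,3) that by auto
  have col: "col ?W i = (1 / sqrt (ws ! i \<bullet> ws ! i)) \<cdot>\<^sub>v ws ! i" if "i < n" for i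
    using ws(3) carr[OF that] that by simp
  have "(transpose_mat ?W * ?W) $$ (i, j) = 1\<^sub>m n $$ (i, j)" if "i < n" "j < n" for i j
  proof -
    have "(transpose_mat ?W * ?W) $$ (i, j)
        = (1 / sqrt (ws ! i \<bullet> ws ! i)) * (1 / sqrt (ws ! j \<bullet> ws ! j)) * (ws ! i \<bullet> ws ! j)"
      using that ws(3) carr[OF that(1)] carr[OF that(2)] by (simp add: col mult.assoc)
    then show ?thesis
      using that ortho[OF that] pos[of i] by (cases "i = j") (auto simp: field_simps)
  qed
  then show ?thesis unfolding orthonormal_mat_def using ws(3) by auto
qed

lemma orthonormal_mat_first_col:
  assumes v: "v \<in> carrier_vec n" and v0: "v \<noteq> 0\<^sub>v n"
  shows "\<exists>W. orthonormal_mat n W \<and> col W 0 = (1 / sqrt (v \<bullet> v)) \<cdot>\<^sub>v v"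
proof -
  interpret cof_vec_space n "TYPE(real)" .
  define bs where "bs = basis_completion v"
  note bs = basis_completion[OF v v0, folded bs_def]
  obtain vs where bs_Cons: "bs = v # vs"
    using bs(6,7) v0 v by (cases bs) auto
  define ws where "ws = gram_schmidt n bs"
  note ws = gram_schmidt_result[OF bs(2,4,5) ws_def]
  have hd_ws: "hd ws = v"
    unfolding ws_def bs_Cons using v by simp
  define W where "W = mat_of_cols n (map (\<lambda>w. (1 / sqrt (w \<bullet> w)) \<cdot>\<^sub>v w) ws)"
  have "orthonormal_mat n W"
    unfolding W_def by (rule orthonormal_mat_of_corthogonal) (use ws bs(6) in auto)
  moreover have "col W 0 = (1 / sqrt (v \<bullet> v)) \<cdot>\<^sub>v v"
    using hd_ws ws(3,4) bs(6) bs_Cons v unfolding W_def by (cases ws) auto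
  ultimately show ?thesis by blast
qed

lemma deflate_by_eigen_col:
  assumes A: "A \<in> carrier_mat (Suc m) (Suc m)" and W: "orthonormal_mat (Suc m) W"
    and eigen: "A *\<^sub>v col W 0 = e \<cdot>\<^sub>v col W 0"
  shows "\<exists>A2 A3. A2 \<in> carrier_mat 1 m \<and> A3 \<in> carrier_mat m m \<and>
    transpose_mat W * A * W = four_block_mat (mat 1 1 (\<lambda>_. e)) A2 (0\<^sub>m m 1) A3"
proof -
  define A' where "A' = transpose_mat W * A * W"
  have Wc: "W \<in> carrier_mat (Suc m) (Suc m)" by (rule orthonormal_mat_carrier[OF W])
  have A': "A' \<in> carrier_mat (1 + m) (1 + m)" using A Wc unfolding A'_def by auto
  have first_col: "A' $$ (i, 0) = (if i = 0 then e else 0)" if i: "i < Suc m" for i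
  proof -
    have "A' $$ (i, 0) = col W i \<bullet> (A *\<^sub>v col W 0)"
      unfolding A'_def using A Wc i by (simp add: mult_mat_vec_def)
    also have "\<dots> = e * (transpose_mat W * W) $$ (i, 0)"
      using Wc i by (simp add: eigen)
    finally show ?thesis using orthonormal_mat_left_inverse[OF W] i by simp
  qed
  obtain A1 A2 A0 A3 where split: "split_block A' 1 1 = (A1, A2, A0, A3)"
    by (cases "split_block A' 1 1") auto
  note blocks = split_block[OF split, of m m] A'
  have "A1 = mat 1 1 (\<lambda>_. e)" "A0 = 0\<^sub>m m 1"
    using split first_col A' by (auto simp: split_block_def Let_def)
  then show ?thesis using blocks Wc unfolding A'_def by auto
qed

lemma four_block_conj:
  fixes A1 :: "'a :: comm_ring_1 mat"
  assumes A1: "A1 \<in> carrier_mat 1 1" and A2: "A2 \<in> carrier_mat 1 m" and A3: "A3 \<in> carrier_mat m m"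
    and P: "P \<in> carrier_mat m m"
  shows "transpose_mat (four_block_mat (1\<^sub>m 1) (0\<^sub>m 1 m) (0\<^sub>m m 1) P) * four_block_mat A1 A2 (0\<^sub>m m 1) A3
      * four_block_mat (1\<^sub>m 1) (0\<^sub>m 1 m) (0\<^sub>m m 1) P
    = four_block_mat A1 (A2 * P) (0\<^sub>m m 1) (transpose_mat P * A3 * P)"
  using assms
  by (simp add: transpose_four_block_mat[of _ 1 1 _ m _ m] mult_four_block_mat[of _ 1 1 _ m _ m _ _ 1 _ m]
      left_mult_one_mat[OF A1] left_mult_one_mat[OF A2] right_mult_one_mat[OF A1])

lemma deflate_by_eigenvalue:
  fixes A :: "real mat"
  assumes A: "A \<in> carrier_mat (Suc m) (Suc m)" and e: "eigenvalue A e"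
  shows "\<exists>W A2 A3. orthonormal_mat (Suc m) W \<and> A2 \<in> carrier_mat 1 m \<and> A3 \<in> carrier_mat m m \<and>
    transpose_mat W * A * W = four_block_mat (mat 1 1 (\<lambda>_. e)) A2 (0\<^sub>m m 1) A3 \<and>
    char_poly A = [:-e, 1:] * char_poly A3"
proof -
  from find_eigenvector[OF A e] obtain v where
    v: "v \<in> carrier_vec (Suc m)" "v \<noteq> 0\<^sub>v (Suc m)" "A *\<^sub>v v = e \<cdot>\<^sub>v v"
    unfolding eigenvector_def using A by auto
  obtain W where W: "orthonormal_mat (Suc m) W" and W0: "col W 0 = (1 / sqrt (v \<bullet> v)) \<cdot>\<^sub>v v"
    using orthonormal_mat_first_col[OF v(1,2)] by blast
  have Wc: "W \<in> carrier_mat (Suc m) (Suc m)" by (rule orthonormal_mat_carrier[OF W])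
  have "A *\<^sub>v col W 0 = e \<cdot>\<^sub>v col W 0"
    unfolding W0 using v A by (simp add: mult_mat_vec smult_smult_assoc mult.commute)
  with deflate_by_eigen_col[OF A W] obtain A2 A3 where
    A2: "A2 \<in> carrier_mat 1 m" and A3: "A3 \<in> carrier_mat m m"
    and WAW: "transpose_mat W * A * W = four_block_mat (mat 1 1 (\<lambda>_. e)) A2 (0\<^sub>m m 1) A3"
    by blast
  have "similar_mat (transpose_mat W * A * W) A"
    unfolding similar_mat_def similar_mat_wit_def Let_def
    using A Wc orthonormal_mat_left_inverse[OF W] orthonormal_mat_right_inverse[OF W]
    by (intro exI[of _ "transpose_mat W"] exI[of _ W]) auto
  then have "char_poly A = char_poly (four_block_mat (mat 1 1 (\<lambda>_. e)) A2 (0\<^sub>m m 1) A3)"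
    by (simp add: char_poly_similar WAW)
  also have "\<dots> = char_poly (mat 1 1 (\<lambda>_. e)) * char_poly A3"
    by (rule char_poly_four_block_zeros_col[OF _ A2 A3]) simp
  also have "char_poly (mat 1 1 (\<lambda>_. e)) = [:-e, 1:]"
    by (simp add: char_poly_defs det_def sign_def)
  finally show ?thesis using W A2 A3 WAW by blast
qed

lemma real_schur_decomposition:
  fixes A :: "real mat"
  assumes "A \<in> carrier_mat n n" and "char_poly A = (\<Prod>e\<leftarrow>es. [:-e, 1:])"
  shows "\<exists>P. orthonormal_mat n P \<and> upper_triangular (transpose_mat P * A * P)
    \<and> diag_mat (transpose_mat P * A * P) = es"
  using assms
proof (induction es arbitrary: n A)
  case Nil
  then have "n = 0" using degree_monic_char_poly[OF Nil(1)] by simp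
  with Nil(1) show ?case
    by (intro exI[of _ "1\<^sub>m 0"]) (auto simp: orthonormal_mat_def upper_triangular_def diag_mat_def)
next
  case (Cons e es n A)
  note A = Cons.prems(1)
  have cp: "char_poly A = [:-e, 1:] * (\<Prod>e\<leftarrow>es. [:-e, 1:])" using Cons.prems(2) by simp
  have "degree (char_poly A) = Suc (length es)"
    unfolding cp by (subst degree_mult_eq) (auto simp: degree_linear_factors)
  with degree_monic_char_poly[OF A] obtain m where n: "n = Suc m" by (cases n) auto
  have "eigenvalue A e" unfolding eigenvalue_root_char_poly[OF A] cp by simp
  with deflate_by_eigenvalue[of A m e] A obtain W A2 A3 where
    W: "orthonormal_mat n W" and A2: "A2 \<in> carrier_mat 1 m" and A3: "A3 \<in> carrier_mat m m"
    and WAW: "transpose_mat W * A * W = four_block_mat (mat 1 1 (\<lambda>_. e)) A2 (0\<^sub>m m 1) A3"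
    and "char_poly A = [:-e, 1:] * char_poly A3"
    unfolding n by blast
  then have "char_poly A3 = (\<Prod>e\<leftarrow>es. [:-e, 1:])"
    unfolding cp by (metis mult_cancel_left pCons_eq_0_iff zero_neq_one)
  from Cons.IH[OF A3 this] obtain P' where P': "orthonormal_mat m P'"
    and ut: "upper_triangular (transpose_mat P' * A3 * P')"
    and diag: "diag_mat (transpose_mat P' * A3 * P') = es" by blast
  define F where "F = four_block_mat (1\<^sub>m 1) (0\<^sub>m 1 m) (0\<^sub>m m 1) P'"
  have F: "orthonormal_mat n F" unfolding F_def n by (rule orthonormal_mat_block[OF P'])
  have P'c: "P' \<in> carrier_mat m m" by (rule orthonormal_mat_carrier[OF P'])
  have "transpose_mat (W * F) * A * (W * F) = transpose_mat F * (transpose_mat W * A * W) * F"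
    using A orthonormal_mat_carrier[OF W] orthonormal_mat_carrier[OF F]
    by (simp add: transpose_mult[of W n n F n] assoc_mult_mat[of _ n n _ n _ n])
  also have "\<dots> = four_block_mat (mat 1 1 (\<lambda>_. e)) (A2 * P') (0\<^sub>m m 1) (transpose_mat P' * A3 * P')"
    unfolding WAW F_def by (rule four_block_conj[OF _ A2 A3 P'c]) simp
  finally have WFAWF: "transpose_mat (W * F) * A * (W * F) = \<dots>" .
  have "upper_triangular (transpose_mat (W * F) * A * (W * F))"
    unfolding WFAWF using ut P'c A3
    by (intro upper_triangular_four_block) (auto simp: upper_triangular_def)
  moreover have "diag_mat (transpose_mat (W * F) * A * (W * F)) = e # es"
    unfolding WFAWF using P'c A3 diag by (subst diag_four_block_mat) (auto simp: diag_mat_def)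
  ultimately show ?case using orthonormal_mat_mult[OF W F] by blast
qed

section \<open>Symmetric matrices and truncated singular value decompositions\<close>

lemma proots_linear_factors: "proots (\<Prod>e\<leftarrow>es. [:-e, 1:]) = mset (es :: 'a :: idom list)"
proof (induction es)
  case (Cons a es)
  have "(\<Prod>e\<leftarrow>es. [:-e, 1:]) \<noteq> (0 :: 'a poly)" by auto
  then show ?case using Cons.IH by (simp add: proots_mult del: mult_pCons_left)
qed simp

lemma real_symmetric_eigenvalue_real:
  fixes S :: "real mat"
  assumes S: "S \<in> carrier_mat n n" and sym: "transpose_mat S = S"
    and ev: "eigenvalue (map_mat complex_of_real S) z"
  shows "z \<in> \<real>"
proof -
  from ev obtain v where "eigenvector (map_mat complex_of_real S) v z"
    unfolding eigenvalue_def by blast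
  then have v: "v \<in> carrier_vec n" "v \<noteq> 0\<^sub>v n" and Sv: "map_mat complex_of_real S *\<^sub>v v = z \<cdot>\<^sub>v v"
    unfolding eigenvector_def using S by auto
  have Sji: "S $$ (j, i) = S $$ (i, j)" if "i < n" "j < n" for i j
    using arg_cong[OF sym, of "\<lambda>A. A $$ (i, j)"] S that by simp
  define q where "q = (\<Sum>i<n. cnj (v $ i) * (\<Sum>j<n. of_real (S $$ (i, j)) * v $ j))"
  define N where "N = (\<Sum>i<n. (cmod (v $ i))\<^sup>2)"
  have "(\<Sum>j<n. of_real (S $$ (i, j)) * v $ j) = z * v $ i" if "i < n" for i
    using arg_cong[OF Sv, of "\<lambda>w. w $ i"] S v that by (simp add: scalar_prod_def atLeast0LessThan)
  then have "q = z * (\<Sum>i<n. cnj (v $ i) * v $ i)"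
    unfolding q_def by (simp add: sum_distrib_left mult_ac)
  also have "(\<Sum>i<n. cnj (v $ i) * v $ i) = of_real N"
    unfolding N_def of_real_sum by (intro sum.cong refl) (subst complex_norm_square, rule mult.commute)
  finally have "q = z * of_real N" .
  moreover have "cnj q = q"
  proof -
    have "cnj q = (\<Sum>i<n. \<Sum>j<n. v $ i * (of_real (S $$ (i, j)) * cnj (v $ j)))"
      unfolding q_def by (simp add: sum_distrib_left)
    also have "\<dots> = (\<Sum>j<n. \<Sum>i<n. v $ i * (of_real (S $$ (i, j)) * cnj (v $ j)))"
      by (rule sum.swap)
    also have "\<dots> = q"
      unfolding q_def by (auto simp: sum_distrib_left Sji mult_ac intro!: sum.cong)
    finally show ?thesis .
  qed
  moreover have "N > 0"
  proof -
    obtain i where "i < n" "v $ i \<noteq> 0" using v by (metis eq_vecI carrier_vecD index_zero_vec)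
    then have "(cmod (v $ i))\<^sup>2 \<le> N" "(cmod (v $ i))\<^sup>2 > 0"
      unfolding N_def by (auto intro: member_le_sum)
    then show ?thesis by linarith
  qed
  ultimately show ?thesis
    by (metis Reals_cnj_iff Reals_divide Reals_of_real nonzero_mult_div_cancel_right of_real_eq_0_iff less_irrefl)
qed

lemma real_symmetric_char_poly_splits:
  fixes S :: "real mat"
  assumes S: "S \<in> carrier_mat n n" and sym: "transpose_mat S = S"
  shows "\<exists>es. char_poly S = (\<Prod>e\<leftarrow>es. [:-e, 1:])"
proof -
  interpret of_real_poly: map_poly_inj_idom_hom "of_real :: real \<Rightarrow> complex" ..
  let ?S = "map_mat complex_of_real S"
  obtain as where as: "char_poly ?S = (\<Prod>a\<leftarrow>as. [:-a, 1:])"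
    using char_poly_factorized[of ?S n] S by auto
  have "a \<in> \<real>" if "a \<in> set as" for a
  proof -
    have "poly (char_poly ?S) a = 0" unfolding as using that by (rule linear_poly_root)
    then show ?thesis
      using real_symmetric_eigenvalue_real[OF S sym] eigenvalue_root_char_poly[of ?S n] S by auto
  qed
  then have "map_poly of_real (\<Prod>e\<leftarrow>map Re as. [:-e, 1:]) = (\<Prod>a\<leftarrow>as. [:-a, 1:])"
    by (simp add: of_real_poly.hom_prod_list o_def cong: map_cong)
  then have "map_poly complex_of_real (char_poly S) = map_poly of_real (\<Prod>e\<leftarrow>map Re as. [:-e, 1:])"
    using as of_real_hom.char_poly_hom[OF S, where 'a = complex] by simp
  then show ?thesis by (metis of_real_poly.injectivity)
qed

lemma orthonormal_mat_col_inner: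
  assumes P: "orthonormal_mat d P" and "a < d" "b < d"
  shows "(\<Sum>i<d. P $$ (i, a) * P $$ (i, b)) = (if a = b then 1 else 0)"
proof -
  have "(transpose_mat P * P) $$ (a, b) = (\<Sum>i<d. P $$ (i, a) * P $$ (i, b))"
    using orthonormal_mat_carrier[OF P] assms by (simp add: scalar_prod_def atLeast0LessThan)
  then show ?thesis using orthonormal_mat_left_inverse[OF P] assms by simp
qed

lemma orthonormal_mat_row_inner:
  assumes P: "orthonormal_mat d P" and "i < d" "j < d"
  shows "(\<Sum>a<d. P $$ (i, a) * P $$ (j, a)) = (if i = j then 1 else 0)"
proof -
  have "(P * transpose_mat P) $$ (i, j) = (\<Sum>a<d. P $$ (i, a) * P $$ (j, a))"
    using orthonormal_mat_carrier[OF P] assms by (simp add: scalar_prod_def atLeast0LessThan)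
  then show ?thesis using orthonormal_mat_right_inverse[OF P] assms by simp
qed

lemma diag_mult_transpose_mat:
  fixes Y :: "real mat"
  assumes "Y \<in> carrier_mat d m" and "a < d"
  shows "(Y * transpose_mat Y) $$ (a, a) = (\<Sum>c<m. (Y $$ (a, c))\<^sup>2)"
  using assms by (simp add: scalar_prod_def atLeast0LessThan power2_eq_square)

lemma sum_sq_orthonormal_combination:
  fixes p :: "nat \<Rightarrow> 'a \<Rightarrow> real"
  assumes orth: "\<And>a b. a \<in> R \<Longrightarrow> b \<in> R \<Longrightarrow> (\<Sum>i<d. p i a * p i b) = (if a = b then 1 else 0)"
    and R: "finite R"
  shows "(\<Sum>i<d. (\<Sum>a\<in>R. p i a * w a)\<^sup>2) = (\<Sum>a\<in>R. (w a)\<^sup>2)"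
proof -
  have "(\<Sum>i<d. (\<Sum>a\<in>R. p i a * w a)\<^sup>2) = (\<Sum>a\<in>R. \<Sum>b\<in>R. w a * w b * (\<Sum>i<d. p i a * p i b))"
    by (simp add: power2_eq_square sum_product sum_distrib_left mult_ac sum.swap[of _ "{..<d}"])
  also have "\<dots> = (\<Sum>a\<in>R. \<Sum>b\<in>R. if a = b then w a * w b else 0)"
    by (intro sum.cong refl) (simp add: orth)
  also have "\<dots> = (\<Sum>a\<in>R. (w a)\<^sup>2)"
    using R by (simp add: power2_eq_square)
  finally show ?thesis .
qed

definition colspan_proj :: "(nat \<Rightarrow> nat \<Rightarrow> real) \<Rightarrow> nat \<Rightarrow> nat \<Rightarrow> nat \<Rightarrow> real" where
  "colspan_proj U r i i' = (\<Sum>a<r. U i a * U i' a)"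

definition orthonormal_cols :: "nat \<Rightarrow> nat \<Rightarrow> (nat \<Rightarrow> nat \<Rightarrow> real) \<Rightarrow> bool" where
  "orthonormal_cols d r U \<longleftrightarrow> (\<forall>a<r. \<forall>b<r. (\<Sum>i<d. U i a * U i b) = (if a = b then 1 else 0))"

lemma orthonormal_mat_projection_residual:
  fixes X :: "real mat"
  assumes P: "orthonormal_mat d P" and X: "X \<in> carrier_mat d m" and r: "r \<le> d"
  shows "(\<Sum>i<d. \<Sum>c<m. (X $$ (i, c) - (\<Sum>i'<d. colspan_proj (\<lambda>i a. P $$ (i, a)) r i i' * X $$ (i', c)))\<^sup>2)
    = (\<Sum>a = r..<d. \<Sum>c<m. ((transpose_mat P * X) $$ (a, c))\<^sup>2)"
proof -
  define y where "y a c = (transpose_mat P * X) $$ (a, c)" for a c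
  have y: "y a c = (\<Sum>i<d. P $$ (i, a) * X $$ (i, c))" if "a < d" "c < m" for a c
    unfolding y_def using orthonormal_mat_carrier[OF P] X that
    by (simp add: scalar_prod_def atLeast0LessThan)
  have residual: "X $$ (i, c) - (\<Sum>i'<d. colspan_proj (\<lambda>i a. P $$ (i, a)) r i i' * X $$ (i', c))
      = (\<Sum>a = r..<d. P $$ (i, a) * y a c)" if "i < d" "c < m" for i c
  proof -
    have expand: "(\<Sum>a\<in>A. P $$ (i, a) * y a c) = (\<Sum>i'<d. (\<Sum>a\<in>A. P $$ (i, a) * P $$ (i', a)) * X $$ (i', c))"
      if "A \<subseteq> {..<d}" for A
      using that \<open>c < m\<close> by (simp add: y subset_eq sum_distrib_left sum_distrib_right mult_ac sum.swap[of _ A])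
    have "X $$ (i, c) = (\<Sum>i'<d. if i = i' then X $$ (i', c) else 0)"
      using \<open>i < d\<close> by simp
    also have "\<dots> = (\<Sum>i'<d. (\<Sum>a<d. P $$ (i, a) * P $$ (i', a)) * X $$ (i', c))"
      using \<open>i < d\<close> by (intro sum.cong refl) (simp add: orthonormal_mat_row_inner[OF P])
    also have "\<dots> = (\<Sum>a<d. P $$ (i, a) * y a c)" by (rule expand[OF order_refl, symmetric])
    also have "\<dots> = (\<Sum>a<r. P $$ (i, a) * y a c) + (\<Sum>a = r..<d. P $$ (i, a) * y a c)"
      using sum.atLeastLessThan_concat[of 0 r d "\<lambda>a. P $$ (i, a) * y a c"] r by (simp add: atLeast0LessThan)
    also have "(\<Sum>a<r. P $$ (i, a) * y a c) = (\<Sum>i'<d. colspan_proj (\<lambda>i a. P $$ (i, a)) r i i' * X $$ (i', c))"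
      unfolding colspan_proj_def using r by (intro expand) auto
    finally show ?thesis by simp
  qed
  have "(\<Sum>i<d. \<Sum>c<m. (X $$ (i, c) - (\<Sum>i'<d. colspan_proj (\<lambda>i a. P $$ (i, a)) r i i' * X $$ (i', c)))\<^sup>2)
      = (\<Sum>c<m. \<Sum>i<d. (\<Sum>a = r..<d. P $$ (i, a) * y a c)\<^sup>2)"
    by (simp add: residual sum.swap[of _ "{..<d}"])
  also have "\<dots> = (\<Sum>c<m. \<Sum>a = r..<d. (y a c)\<^sup>2)"
    by (intro sum.cong refl sum_sq_orthonormal_combination) (auto simp: orthonormal_mat_col_inner[OF P])
  finally show ?thesis unfolding y_def by (simp add: sum.swap[of _ "{..<m}"])
qed

lemma sing_vals_linear_factors:
  assumes "char_poly (X * transpose_mat X) = (\<Prod>e\<leftarrow>es. [:-e, 1:])"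
  shows "sing_vals X = map sqrt (rev (sort es))"
  unfolding sing_vals_def assms proots_linear_factors by simp

lemma left_singular_truncation:
  fixes X :: "real mat"
  assumes X: "X \<in> carrier_mat d m" and r: "r \<le> d"
  shows "\<exists>U. orthonormal_cols d r U \<and>
    (\<Sum>i<d. \<Sum>c<m. (X $$ (i, c) - (\<Sum>i'<d. colspan_proj U r i i' * X $$ (i', c)))\<^sup>2)
      = (\<Sum>t = Suc r..d. (sigma t X)\<^sup>2)"
proof -
  define S where "S = X * transpose_mat X"
  have S: "S \<in> carrier_mat d d" unfolding S_def using X by auto
  have "transpose_mat S = S" unfolding S_def using X by (simp add: transpose_mult[of X d m])
  then obtain es where es: "char_poly S = (\<Prod>e\<leftarrow>es. [:-e, 1:])"
    using real_symmetric_char_poly_splits[OF S] by blast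
  \<comment> \<open>Ordering the eigenvalues decreasingly makes the diagonal of \<open>P\<^sup>T S P\<close>
    the list of squared singular values.\<close>
  define es' where "es' = rev (sort es)"
  have sv: "sing_vals X = map sqrt es'"
    using sing_vals_linear_factors[of X es] es unfolding S_def es'_def by simp
  have "mset es' = mset es" unfolding es'_def by simp
  then have cp: "char_poly S = (\<Prod>e\<leftarrow>es'. [:-e, 1:])"
    unfolding es by (metis mset_map prod_mset_prod_list)
  obtain P where P: "orthonormal_mat d P" and diag: "diag_mat (transpose_mat P * S * P) = es'"
    using real_schur_decomposition[OF S cp] by blast
  define Y where "Y = transpose_mat P * X"
  have Y: "Y \<in> carrier_mat d m" unfolding Y_def using orthonormal_mat_carrier[OF P] X by auto
  have "transpose_mat P * S * P = transpose_mat P * X * (transpose_mat X * P)"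
    unfolding S_def using orthonormal_mat_carrier[OF P] X
    by (simp add: assoc_mult_mat[of _ d d "X * transpose_mat X" d P d]
        assoc_mult_mat[of X d m "transpose_mat X" d P d]
        assoc_mult_mat[of "transpose_mat P" d d X m "transpose_mat X * P" d])
  also have "\<dots> = Y * transpose_mat Y"
    unfolding Y_def using orthonormal_mat_carrier[OF P] X by (simp add: transpose_mult[of _ d d X m])
  finally have "transpose_mat P * S * P = Y * transpose_mat Y" .
  then have es': "es' ! a = (\<Sum>c<m. (Y $$ (a, c))\<^sup>2)" if "a < d" for a
    using diag[symmetric] diag_mult_transpose_mat[OF Y that] Y that by (auto simp: diag_mat_def)
  have len: "length es' = d"
    using diag[symmetric] S orthonormal_mat_carrier[OF P] by (simp add: diag_mat_def)
  have "(\<Sum>t = Suc r..d. (sigma t X)\<^sup>2) = (\<Sum>a = r..<d. (sigma (Suc a) X)\<^sup>2)"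
    unfolding atLeastLessThanSuc_atLeastAtMost[symmetric] by (rule sum.shift_bounds_Suc_ivl)
  also have "\<dots> = (\<Sum>a = r..<d. \<Sum>c<m. (Y $$ (a, c))\<^sup>2)"
    using len sv es' by (intro sum.cong refl) (auto simp: sigma_def sum_nonneg)
  finally have tail: "(\<Sum>t = Suc r..d. (sigma t X)\<^sup>2) = (\<Sum>a = r..<d. \<Sum>c<m. (Y $$ (a, c))\<^sup>2)" .
  have cols: "orthonormal_cols d r (\<lambda>i a. P $$ (i, a))"
    unfolding orthonormal_cols_def using orthonormal_mat_col_inner[OF P] r by auto
  have residual: "(\<Sum>i<d. \<Sum>c<m. (X $$ (i, c) - (\<Sum>i'<d. colspan_proj (\<lambda>i a. P $$ (i, a)) r i i' * X $$ (i', c)))\<^sup>2)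
      = (\<Sum>t = Suc r..d. (sigma t X)\<^sup>2)"
    by (simp only: orthonormal_mat_projection_residual[OF P X r] tail Y_def)
  show ?thesis by (rule exI[of _ "\<lambda>i a. P $$ (i, a)"], rule conjI[OF cols residual])
qed

section \<open>Orthogonal projectors for a positive semidefinite form\<close>

definition orth_projector :: "('v::ab_group_add \<Rightarrow> 'v \<Rightarrow> real) \<Rightarrow> ('v \<Rightarrow> 'v) \<Rightarrow> bool" where
  "orth_projector ip M \<longleftrightarrow>
    (\<forall>x y. M (x + y) = M x + M y) \<and> (\<forall>x y. ip (M x) y = ip x (M y)) \<and> (\<forall>x. M (M x) = M x)"

locale sym_psd_form =
  fixes ip :: "'v::ab_group_add \<Rightarrow> 'v \<Rightarrow> real"
  assumes add_left: "ip (x + y) z = ip x z + ip y z"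
    and commute: "ip x y = ip y x"
    and nonneg: "0 \<le> ip x x"
begin

lemma add_right: "ip x (y + z) = ip x y + ip x z"
  using add_left commute by metis

lemma diff_left: "ip (x - y) z = ip x z - ip y z"
  using add_left[of "x - y" y z] by simp

lemma zero_left: "ip 0 z = 0"
  using diff_left[of 0 0 z] by simp

lemma projector_diff:
  assumes "orth_projector ip M"
  shows "M (x - y) = M x - M y"
  using assms unfolding orth_projector_def by (metis add_diff_cancel diff_add_cancel)

lemma projector_residual_orthogonal:
  assumes M: "orth_projector ip M"
  shows "ip (x - M x) (M y) = 0"
proof -
  have "ip (x - M x) (M y) = ip (M (x - M x)) y"
    using M unfolding orth_projector_def by metis
  also have "M (x - M x) = 0"
    using M projector_diff[OF M] unfolding orth_projector_def by simp
  finally show ?thesis by (simp add: zero_left)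
qed

lemma pythagoras:
  assumes "ip a b = 0"
  shows "ip (a + b) (a + b) = ip a a + ip b b"
  using assms commute[of a b] by (simp add: add_left add_right)

lemma projector_contraction:
  assumes M: "orth_projector ip M"
  shows "ip (M x) (M x) \<le> ip x x"
proof -
  have "ip x x = ip (M x + (x - M x)) (M x + (x - M x))" by simp
  also have "\<dots> = ip (M x) (M x) + ip (x - M x) (x - M x)"
    using projector_residual_orthogonal[OF M, of x x] commute by (intro pythagoras) metis
  finally show ?thesis using nonneg[of "x - M x"] by simp
qed

lemma three_projectors_residual:
  assumes M1: "orth_projector ip M1" and M2: "orth_projector ip M2" and M3: "orth_projector ip M3"
    and comm: "\<And>x. M1 (M2 x) = M2 (M1 x)"
  shows "ip (x - M1 (M2 (M3 x))) (x - M1 (M2 (M3 x)))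
    \<le> ip (x - M1 x) (x - M1 x) + ip (x - M2 x) (x - M2 x) + ip (x - M3 x) (x - M3 x)"
proof -
  define a where "a = x - M1 x"
  define b where "b = M1 (x - M2 x)"
  define c where "c = M1 (M2 (x - M3 x))"
  have split: "x - M1 (M2 (M3 x)) = a + b + c"
    unfolding a_def b_def c_def projector_diff[OF M1] projector_diff[OF M2] by simp
  have "ip a b = 0" "ip a c = 0"
    unfolding a_def b_def c_def by (rule projector_residual_orthogonal[OF M1])+
  moreover have "ip b c = 0"
  proof -
    have "b = M1 x - M2 (M1 x)" "c = M2 (M1 (x - M3 x))"
      unfolding b_def c_def projector_diff[OF M1] comm by simp_all
    then show ?thesis using projector_residual_orthogonal[OF M2] by simp
  qed
  ultimately have "ip (a + b + c) (a + b + c) = ip a a + ip b b + ip c c"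
    using commute[of a b] commute[of a c] commute[of b c] by (simp add: add_left add_right)
  moreover have "ip b b \<le> ip (x - M2 x) (x - M2 x)"
    unfolding b_def by (rule projector_contraction[OF M1])
  moreover have "ip c c \<le> ip (x - M3 x) (x - M3 x)"
    unfolding c_def using projector_contraction[OF M1] projector_contraction[OF M2] by (rule order_trans)
  ultimately show ?thesis unfolding split a_def by simp
qed

end

section \<open>Mode products and the truncated HOSVD\<close>

type_synonym tensor3 = "nat \<Rightarrow> nat \<Rightarrow> nat \<Rightarrow> real"

definition tensor_inner :: "nat \<Rightarrow> nat \<Rightarrow> nat \<Rightarrow> tensor3 \<Rightarrow> tensor3 \<Rightarrow> real" where
  "tensor_inner d1 d2 d3 X Y = (\<Sum>i<d1. \<Sum>j<d2. \<Sum>k<d3. X i j k * Y i j k)"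

definition mode1 :: "nat \<Rightarrow> (nat \<Rightarrow> nat \<Rightarrow> real) \<Rightarrow> tensor3 \<Rightarrow> tensor3" where
  "mode1 d Q X = (\<lambda>i j k. \<Sum>i'<d. Q i i' * X i' j k)"

definition mode2 :: "nat \<Rightarrow> (nat \<Rightarrow> nat \<Rightarrow> real) \<Rightarrow> tensor3 \<Rightarrow> tensor3" where
  "mode2 d Q X = (\<lambda>i j k. \<Sum>j'<d. Q j j' * X i j' k)"

definition mode3 :: "nat \<Rightarrow> (nat \<Rightarrow> nat \<Rightarrow> real) \<Rightarrow> tensor3 \<Rightarrow> tensor3" where
  "mode3 d Q X = (\<lambda>i j k. \<Sum>k'<d. Q k k' * X i j k')"

lemma frob3_eq_sqrt_tensor_inner: "frob3 d1 d2 d3 X = sqrt (tensor_inner d1 d2 d3 X X)"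
  by (simp add: frob3_def tensor_inner_def power2_eq_square)

lemma tensor_inner_psd: "sym_psd_form (tensor_inner d1 d2 d3)"
  by unfold_locales (auto simp: tensor_inner_def sum.distrib algebra_simps intro!: sum_nonneg)

lemma tensor_inner_mode2_order:
  "tensor_inner d1 d2 d3 X Y = (\<Sum>i<d1. \<Sum>k<d3. \<Sum>j<d2. X i j k * Y i j k)"
  unfolding tensor_inner_def by (rule sum.cong[OF refl]) (rule sum.swap)

lemma tensor_inner_mode1_order:
  "tensor_inner d1 d2 d3 X Y = (\<Sum>j<d2. \<Sum>k<d3. \<Sum>i<d1. X i j k * Y i j k)"
proof -
  have "tensor_inner d1 d2 d3 X Y = (\<Sum>j<d2. \<Sum>i<d1. \<Sum>k<d3. X i j k * Y i j k)"
    unfolding tensor_inner_def by (rule sum.swap)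
  also have "\<dots> = (\<Sum>j<d2. \<Sum>k<d3. \<Sum>i<d1. X i j k * Y i j k)"
    by (rule sum.cong[OF refl]) (rule sum.swap)
  finally show ?thesis .
qed

lemma sum_sym_kernel:
  fixes Q :: "'a \<Rightarrow> 'a \<Rightarrow> real"
  assumes "\<And>a b. Q a b = Q b a"
  shows "(\<Sum>a\<in>A. (\<Sum>b\<in>A. Q a b * f b) * g a) = (\<Sum>a\<in>A. f a * (\<Sum>b\<in>A. Q a b * g b))"
proof -
  have "(\<Sum>a\<in>A. (\<Sum>b\<in>A. Q a b * f b) * g a) = (\<Sum>a\<in>A. \<Sum>b\<in>A. Q a b * f b * g a)"
    by (simp add: sum_distrib_right)
  also have "\<dots> = (\<Sum>b\<in>A. \<Sum>a\<in>A. Q a b * f b * g a)" by (rule sum.swap)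
  also have "\<dots> = (\<Sum>b\<in>A. f b * (\<Sum>a\<in>A. Q b a * g a))"
    by (simp add: sum_distrib_left assms mult_ac)
  finally show ?thesis .
qed

lemma colspan_proj_sym: "colspan_proj U r i i' = colspan_proj U r i' i"
  unfolding colspan_proj_def by (simp add: mult.commute)

lemma colspan_proj_idem:
  assumes "orthonormal_cols d r U"
  shows "(\<Sum>i'<d. colspan_proj U r i i' * (\<Sum>i''<d. colspan_proj U r i' i'' * f i''))
    = (\<Sum>i''<d. colspan_proj U r i i'' * f i'')"
proof -
  have idem: "(\<Sum>i'<d. colspan_proj U r i i' * colspan_proj U r i' i'') = colspan_proj U r i i''" for i''
  proof -
    have "(\<Sum>i'<d. colspan_proj U r i i' * colspan_proj U r i' i'')
        = (\<Sum>i'<d. \<Sum>a<r. \<Sum>b<r. (U i a * U i'' b) * (U i' a * U i' b))"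
      unfolding colspan_proj_def by (simp add: sum_product mult_ac)
    also have "\<dots> = (\<Sum>a<r. \<Sum>b<r. \<Sum>i'<d. (U i a * U i'' b) * (U i' a * U i' b))"
      by (subst sum.swap) (rule sum.cong[OF refl], rule sum.swap)
    also have "\<dots> = (\<Sum>a<r. \<Sum>b<r. if a = b then U i a * U i'' b else 0)"
      using assms unfolding orthonormal_cols_def
      by (intro sum.cong refl) (simp add: sum_distrib_left[symmetric])
    also have "\<dots> = colspan_proj U r i i''"
      unfolding colspan_proj_def by simp
    finally show ?thesis .
  qed
  have "(\<Sum>i'<d. colspan_proj U r i i' * (\<Sum>i''<d. colspan_proj U r i' i'' * f i''))
      = (\<Sum>i'<d. \<Sum>i''<d. colspan_proj U r i i' * colspan_proj U r i' i'' * f i'')"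
    by (simp add: sum_distrib_left mult.assoc)
  also have "\<dots> = (\<Sum>i''<d. \<Sum>i'<d. colspan_proj U r i i' * colspan_proj U r i' i'' * f i'')"
    by (rule sum.swap)
  also have "\<dots> = (\<Sum>i''<d. colspan_proj U r i i'' * f i'')"
    by (simp add: sum_distrib_right[symmetric] idem)
  finally show ?thesis .
qed

lemma mode1_orth_projector:
  assumes "orthonormal_cols d1 r U"
  shows "orth_projector (tensor_inner d1 d2 d3) (mode1 d1 (colspan_proj U r))"
  unfolding orth_projector_def
proof (intro conjI allI)
  fix X Y :: tensor3
  show "mode1 d1 (colspan_proj U r) (X + Y) = mode1 d1 (colspan_proj U r) X + mode1 d1 (colspan_proj U r) Y"
    by (simp add: mode1_def fun_eq_iff sum.distrib distrib_left)
  show "tensor_inner d1 d2 d3 (mode1 d1 (colspan_proj U r) X) Y = tensor_inner d1 d2 d3 X (mode1 d1 (colspan_proj U r) Y)"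
    unfolding tensor_inner_mode1_order mode1_def
    by (rule sum.cong[OF refl], rule sum.cong[OF refl], rule sum_sym_kernel, rule colspan_proj_sym)
  show "mode1 d1 (colspan_proj U r) (mode1 d1 (colspan_proj U r) X) = mode1 d1 (colspan_proj U r) X"
    by (simp add: mode1_def fun_eq_iff colspan_proj_idem[OF assms])
qed

lemma mode2_orth_projector:
  assumes "orthonormal_cols d2 r U"
  shows "orth_projector (tensor_inner d1 d2 d3) (mode2 d2 (colspan_proj U r))"
  unfolding orth_projector_def
proof (intro conjI allI)
  fix X Y :: tensor3
  show "mode2 d2 (colspan_proj U r) (X + Y) = mode2 d2 (colspan_proj U r) X + mode2 d2 (colspan_proj U r) Y"
    by (simp add: mode2_def fun_eq_iff sum.distrib distrib_left)
  show "tensor_inner d1 d2 d3 (mode2 d2 (colspan_proj U r) X) Y = tensor_inner d1 d2 d3 X (mode2 d2 (colspan_proj U r) Y)"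
    unfolding tensor_inner_mode2_order mode2_def
    by (rule sum.cong[OF refl], rule sum.cong[OF refl], rule sum_sym_kernel, rule colspan_proj_sym)
  show "mode2 d2 (colspan_proj U r) (mode2 d2 (colspan_proj U r) X) = mode2 d2 (colspan_proj U r) X"
    by (simp add: mode2_def fun_eq_iff colspan_proj_idem[OF assms])
qed

lemma mode3_orth_projector:
  assumes "orthonormal_cols d3 r U"
  shows "orth_projector (tensor_inner d1 d2 d3) (mode3 d3 (colspan_proj U r))"
  unfolding orth_projector_def
proof (intro conjI allI)
  fix X Y :: tensor3
  show "mode3 d3 (colspan_proj U r) (X + Y) = mode3 d3 (colspan_proj U r) X + mode3 d3 (colspan_proj U r) Y"
    by (simp add: mode3_def fun_eq_iff sum.distrib distrib_left)
  show "tensor_inner d1 d2 d3 (mode3 d3 (colspan_proj U r) X) Y = tensor_inner d1 d2 d3 X (mode3 d3 (colspan_proj U r) Y)"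
    unfolding tensor_inner_def mode3_def
    by (rule sum.cong[OF refl], rule sum.cong[OF refl], rule sum_sym_kernel, rule colspan_proj_sym)
  show "mode3 d3 (colspan_proj U r) (mode3 d3 (colspan_proj U r) X) = mode3 d3 (colspan_proj U r) X"
    by (simp add: mode3_def fun_eq_iff colspan_proj_idem[OF assms])
qed

lemma mode2_mode1_commute: "mode2 d' Q' (mode1 d Q X) = mode1 d Q (mode2 d' Q' X)"
  unfolding mode1_def mode2_def
  by (simp add: fun_eq_iff sum_distrib_left mult.left_commute sum.swap[of _ "{..<d}"])

lemma mode3_mode1_commute: "mode3 d' Q' (mode1 d Q X) = mode1 d Q (mode3 d' Q' X)"
  unfolding mode1_def mode3_def
  by (simp add: fun_eq_iff sum_distrib_left mult.left_commute sum.swap[of _ "{..<d}"])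

lemma mode3_mode2_commute: "mode3 d' Q' (mode2 d Q X) = mode2 d Q (mode3 d' Q' X)"
  unfolding mode2_def mode3_def
  by (simp add: fun_eq_iff sum_distrib_left mult.left_commute sum.swap[of _ "{..<d}"])

lemma mode1_mode1: "mode1 r Q (mode1 d Q' X) = mode1 d (\<lambda>i i'. \<Sum>a<r. Q i a * Q' a i') X"
  unfolding mode1_def
  by (simp add: fun_eq_iff sum_distrib_left sum_distrib_right mult.assoc sum.swap[of _ "{..<r}"])

lemma mode2_mode2: "mode2 r Q (mode2 d Q' X) = mode2 d (\<lambda>j j'. \<Sum>b<r. Q j b * Q' b j') X"
  unfolding mode2_def
  by (simp add: fun_eq_iff sum_distrib_left sum_distrib_right mult.assoc sum.swap[of _ "{..<r}"])

lemma mode3_mode3: "mode3 r Q (mode3 d Q' X) = mode3 d (\<lambda>k k'. \<Sum>c<r. Q k c * Q' c k') X"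
  unfolding mode3_def
  by (simp add: fun_eq_iff sum_distrib_left sum_distrib_right mult.assoc sum.swap[of _ "{..<r}"])

lemma tucker_eq_modes: "tucker r1 r2 r3 G U1 U2 U3 = mode1 r1 U1 (mode2 r2 U2 (mode3 r3 U3 G))"
  unfolding tucker_def mode1_def mode2_def mode3_def
  by (simp add: fun_eq_iff sum_distrib_left mult_ac)

lemma tucker_projection_core:
  "tucker r1 r2 r3 (tucker d1 d2 d3 E (\<lambda>a i. U1 i a) (\<lambda>b j. U2 j b) (\<lambda>c k. U3 k c)) U1 U2 U3
    = mode1 d1 (colspan_proj U1 r1) (mode2 d2 (colspan_proj U2 r2) (mode3 d3 (colspan_proj U3 r3) E))"
  unfolding tucker_eq_modes colspan_proj_def
  by (simp add: mode2_mode1_commute mode3_mode1_commute mode3_mode2_commute mode1_mode1 mode2_mode2 mode3_mode3)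

lemma sum_div_mod:
  fixes h :: "nat \<Rightarrow> nat \<Rightarrow> 'a :: comm_monoid_add"
  shows "(\<Sum>c<a * b. h (c div b) (c mod b)) = (\<Sum>j<a. \<Sum>k<b. h j k)"
proof -
  have "(\<Sum>j<a. \<Sum>k<b. h j k) = (\<Sum>(j, k)\<in>{..<a} \<times> {..<b}. h j k)"
    by (simp add: sum.cartesian_product')
  also have "\<dots> = (\<Sum>c<a * b. h (c div b) (c mod b))"
  proof (rule sum.reindex_bij_witness[of _ "\<lambda>c. (c div b, c mod b)" "\<lambda>(j, k). j * b + k"])
    fix c assume "c \<in> {..<a * b}"
    then show "(c div b, c mod b) \<in> {..<a} \<times> {..<b}"
      by (cases "b = 0") (auto simp: less_mult_imp_div_less)
  next
    fix jk assume "jk \<in> {..<a} \<times> {..<b}"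
    then obtain j k where jk: "jk = (j, k)" "j < a" "k < b" by auto
    have "j * b + k < (j + 1) * b" using jk by simp
    also have "\<dots> \<le> a * b" using jk by (intro mult_right_mono) auto
    finally show "(case jk of (j, k) \<Rightarrow> j * b + k) \<in> {..<a * b}" using jk by simp
  qed auto
  finally show ?thesis ..
qed

lemma mode1_truncation:
  assumes "r \<le> d1"
  shows "\<exists>U. orthonormal_cols d1 r U \<and>
    tensor_inner d1 d2 d3 (E - mode1 d1 (colspan_proj U r) E) (E - mode1 d1 (colspan_proj U r) E)
      = (\<Sum>t = Suc r..d1. (sigma t (unfold1 d1 d2 d3 E))\<^sup>2)"
proof -
  define X where "X = unfold1 d1 d2 d3 E"
  have "X \<in> carrier_mat d1 (d2 * d3)" unfolding X_def unfold1_def by simp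
  from left_singular_truncation[OF this assms] obtain U where U: "orthonormal_cols d1 r U"
    and err: "(\<Sum>i<d1. \<Sum>c<d2 * d3. (X $$ (i, c) - (\<Sum>i'<d1. colspan_proj U r i i' * X $$ (i', c)))\<^sup>2)
      = (\<Sum>t = Suc r..d1. (sigma t X)\<^sup>2)" by blast
  have "tensor_inner d1 d2 d3 (E - mode1 d1 (colspan_proj U r) E) (E - mode1 d1 (colspan_proj U r) E)
      = (\<Sum>i<d1. \<Sum>c<d2 * d3. (X $$ (i, c) - (\<Sum>i'<d1. colspan_proj U r i i' * X $$ (i', c)))\<^sup>2)"
  proof (unfold tensor_inner_def, rule sum.cong[OF refl])
    fix i assume i: "i \<in> {..<d1}"
    define h where "h j k = (E i j k - (\<Sum>i'<d1. colspan_proj U r i i' * E i' j k))\<^sup>2" for j k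
    have "(\<Sum>j<d2. \<Sum>k<d3. (E - mode1 d1 (colspan_proj U r) E) i j k * (E - mode1 d1 (colspan_proj U r) E) i j k)
        = (\<Sum>j<d2. \<Sum>k<d3. h j k)"
      by (simp add: h_def mode1_def power2_eq_square)
    also have "\<dots> = (\<Sum>c<d2 * d3. h (c div d3) (c mod d3))"
      by (rule sum_div_mod[symmetric])
    also have "\<dots> = (\<Sum>c<d2 * d3. (X $$ (i, c) - (\<Sum>i'<d1. colspan_proj U r i i' * X $$ (i', c)))\<^sup>2)"
      using i unfolding h_def X_def unfold1_def by (intro sum.cong refl) simp
    finally show "(\<Sum>j<d2. \<Sum>k<d3. (E - mode1 d1 (colspan_proj U r) E) i j k * (E - mode1 d1 (colspan_proj U r) E) i j k)
        = (\<Sum>c<d2 * d3. (X $$ (i, c) - (\<Sum>i'<d1. colspan_proj U r i i' * X $$ (i', c)))\<^sup>2)" .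
  qed
  with U err show ?thesis unfolding X_def by (auto intro!: exI[of _ U])
qed

lemma mode2_truncation:
  assumes "r \<le> d2"
  shows "\<exists>U. orthonormal_cols d2 r U \<and>
    tensor_inner d1 d2 d3 (E - mode2 d2 (colspan_proj U r) E) (E - mode2 d2 (colspan_proj U r) E)
      = (\<Sum>t = Suc r..d2. (sigma t (unfold2 d1 d2 d3 E))\<^sup>2)"
proof -
  define E' where "E' = (\<lambda>j i k. E i j k)"
  obtain U where U: "orthonormal_cols d2 r U"
    and err: "tensor_inner d2 d1 d3 (E' - mode1 d2 (colspan_proj U r) E') (E' - mode1 d2 (colspan_proj U r) E')
      = (\<Sum>t = Suc r..d2. (sigma t (unfold1 d2 d1 d3 E'))\<^sup>2)"
    using mode1_truncation[OF assms] by blast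
  have "unfold1 d2 d1 d3 E' = unfold2 d1 d2 d3 E"
    unfolding E'_def unfold1_def unfold2_def ..
  moreover have "tensor_inner d2 d1 d3 (E' - mode1 d2 (colspan_proj U r) E') (E' - mode1 d2 (colspan_proj U r) E')
      = tensor_inner d1 d2 d3 (E - mode2 d2 (colspan_proj U r) E) (E - mode2 d2 (colspan_proj U r) E)"
    unfolding E'_def tensor_inner_def mode1_def mode2_def fun_diff_def by (rule sum.swap)
  ultimately show ?thesis using U err by (auto intro!: exI[of _ U])
qed

lemma mode3_truncation:
  assumes "r \<le> d3"
  shows "\<exists>U. orthonormal_cols d3 r U \<and>
    tensor_inner d1 d2 d3 (E - mode3 d3 (colspan_proj U r) E) (E - mode3 d3 (colspan_proj U r) E)
      = (\<Sum>t = Suc r..d3. (sigma t (unfold3 d1 d2 d3 E))\<^sup>2)"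
proof -
  define E' where "E' = (\<lambda>k i j. E i j k)"
  obtain U where U: "orthonormal_cols d3 r U"
    and err: "tensor_inner d3 d1 d2 (E' - mode1 d3 (colspan_proj U r) E') (E' - mode1 d3 (colspan_proj U r) E')
      = (\<Sum>t = Suc r..d3. (sigma t (unfold1 d3 d1 d2 E'))\<^sup>2)"
    using mode1_truncation[OF assms] by blast
  have "unfold1 d3 d1 d2 E' = unfold3 d1 d2 d3 E"
    unfolding E'_def unfold1_def unfold3_def ..
  moreover have "tensor_inner d3 d1 d2 (E' - mode1 d3 (colspan_proj U r) E') (E' - mode1 d3 (colspan_proj U r) E')
      = tensor_inner d1 d2 d3 (E - mode3 d3 (colspan_proj U r) E) (E - mode3 d3 (colspan_proj U r) E)"
    unfolding E'_def tensor_inner_def mode1_def mode3_def fun_diff_def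
    by (subst sum.swap) (rule sum.cong[OF refl], rule sum.swap)
  ultimately show ?thesis using U err by (auto intro!: exI[of _ U])
qed

lemma tucker_truncation_error:
  assumes r1: "r1 \<le> d1" and r2: "r2 \<le> d2" and r3: "r3 \<le> d3"
  shows "\<exists>G U1 U2 U3. frob3 d1 d2 d3 (\<lambda>p q k. tucker r1 r2 r3 G U1 U2 U3 p q k - E p q k)
    \<le> sqrt ((\<Sum>t = Suc r1..d1. (sigma t (unfold1 d1 d2 d3 E))\<^sup>2)
          + (\<Sum>t = Suc r2..d2. (sigma t (unfold2 d1 d2 d3 E))\<^sup>2)
          + (\<Sum>t = Suc r3..d3. (sigma t (unfold3 d1 d2 d3 E))\<^sup>2))"
proof -
  interpret sym_psd_form "tensor_inner d1 d2 d3" by (rule tensor_inner_psd)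
  obtain U1 where U1: "orthonormal_cols d1 r1 U1"
    and err1: "tensor_inner d1 d2 d3 (E - mode1 d1 (colspan_proj U1 r1) E) (E - mode1 d1 (colspan_proj U1 r1) E)
      = (\<Sum>t = Suc r1..d1. (sigma t (unfold1 d1 d2 d3 E))\<^sup>2)"
    using mode1_truncation[OF r1] by blast
  obtain U2 where U2: "orthonormal_cols d2 r2 U2"
    and err2: "tensor_inner d1 d2 d3 (E - mode2 d2 (colspan_proj U2 r2) E) (E - mode2 d2 (colspan_proj U2 r2) E)
      = (\<Sum>t = Suc r2..d2. (sigma t (unfold2 d1 d2 d3 E))\<^sup>2)"
    using mode2_truncation[OF r2] by blast
  obtain U3 where U3: "orthonormal_cols d3 r3 U3"
    and err3: "tensor_inner d1 d2 d3 (E - mode3 d3 (colspan_proj U3 r3) E) (E - mode3 d3 (colspan_proj U3 r3) E)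
      = (\<Sum>t = Suc r3..d3. (sigma t (unfold3 d1 d2 d3 E))\<^sup>2)"
    using mode3_truncation[OF r3] by blast
  define G where "G = tucker d1 d2 d3 E (\<lambda>a i. U1 i a) (\<lambda>b j. U2 j b) (\<lambda>c k. U3 k c)"
  let ?M = "mode1 d1 (colspan_proj U1 r1) (mode2 d2 (colspan_proj U2 r2) (mode3 d3 (colspan_proj U3 r3) E))"
  have "frob3 d1 d2 d3 (\<lambda>p q k. tucker r1 r2 r3 G U1 U2 U3 p q k - E p q k) = frob3 d1 d2 d3 (E - ?M)"
    unfolding frob3_def G_def tucker_projection_core by (simp add: power2_commute)
  also have "\<dots> = sqrt (tensor_inner d1 d2 d3 (E - ?M) (E - ?M))"
    by (rule frob3_eq_sqrt_tensor_inner)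
  also have "\<dots> \<le> sqrt ((\<Sum>t = Suc r1..d1. (sigma t (unfold1 d1 d2 d3 E))\<^sup>2)
          + (\<Sum>t = Suc r2..d2. (sigma t (unfold2 d1 d2 d3 E))\<^sup>2)
          + (\<Sum>t = Suc r3..d3. (sigma t (unfold3 d1 d2 d3 E))\<^sup>2))"
  proof (rule real_sqrt_le_mono)
    have "\<And>X. mode1 d1 (colspan_proj U1 r1) (mode2 d2 (colspan_proj U2 r2) X)
        = mode2 d2 (colspan_proj U2 r2) (mode1 d1 (colspan_proj U1 r1) X)"
      by (rule mode2_mode1_commute[symmetric])
    then have "tensor_inner d1 d2 d3 (E - ?M) (E - ?M)
        \<le> tensor_inner d1 d2 d3 (E - mode1 d1 (colspan_proj U1 r1) E) (E - mode1 d1 (colspan_proj U1 r1) E)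
          + tensor_inner d1 d2 d3 (E - mode2 d2 (colspan_proj U2 r2) E) (E - mode2 d2 (colspan_proj U2 r2) E)
          + tensor_inner d1 d2 d3 (E - mode3 d3 (colspan_proj U3 r3) E) (E - mode3 d3 (colspan_proj U3 r3) E)"
      by (rule three_projectors_residual[OF mode1_orth_projector[OF U1] mode2_orth_projector[OF U2]
        mode3_orth_projector[OF U3]])
    then show "tensor_inner d1 d2 d3 (E - ?M) (E - ?M) \<le> (\<Sum>t = Suc r1..d1. (sigma t (unfold1 d1 d2 d3 E))\<^sup>2)
          + (\<Sum>t = Suc r2..d2. (sigma t (unfold2 d1 d2 d3 E))\<^sup>2)
          + (\<Sum>t = Suc r3..d3. (sigma t (unfold3 d1 d2 d3 E))\<^sup>2)"
      by (simp only: err1 err2 err3)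
  qed
  finally show ?thesis by blast
qed

section \<open>Perturbation bound for Kolmogorov--Arnold networks\<close>

lemma vnorm2_nonneg: "0 \<le> vnorm2 m v"
  unfolding vnorm2_def by (auto intro: sum_nonneg)

lemma vnorm2_triangle: "vnorm2 m (\<lambda>i. u i + v i) \<le> vnorm2 m u + vnorm2 m v"
  unfolding vnorm2_def using L2_set_triangle_ineq[of u v "{..<m}"] by (simp add: L2_set_def)

lemma frob3_nonneg: "0 \<le> frob3 d1 d2 d3 A"
  unfolding frob3_def by (intro real_sqrt_ge_zero sum_nonneg) simp

lemma vnorm2_contraction_le:
  "vnorm2 m (\<lambda>q. \<Sum>p<nl. \<Sum>k<nd. A p q k * f p k) \<le> frob3 nl m nd A * sqrt (\<Sum>p<nl. \<Sum>k<nd. (f p k)\<^sup>2)"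
proof -
  define F where "F = (\<Sum>p<nl. \<Sum>k<nd. (f p k)\<^sup>2)"
  have double_sum: "(\<Sum>p<nl. \<Sum>k<nd. g p k) = (\<Sum>x\<in>{..<nl} \<times> {..<nd}. g (fst x) (snd x))"
    for g :: "nat \<Rightarrow> nat \<Rightarrow> real" by (simp add: sum.cartesian_product')
  have "(\<Sum>p<nl. \<Sum>k<nd. A p q k * f p k)\<^sup>2 \<le> (\<Sum>p<nl. \<Sum>k<nd. (A p q k)\<^sup>2) * F" for q
    unfolding F_def double_sum by (rule Cauchy_Schwarz_ineq_sum)
  then have "(\<Sum>q<m. (\<Sum>p<nl. \<Sum>k<nd. A p q k * f p k)\<^sup>2) \<le> (\<Sum>q<m. \<Sum>p<nl. \<Sum>k<nd. (A p q k)\<^sup>2) * F"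
    by (simp add: sum_distrib_right sum_mono)
  also have "(\<Sum>q<m. \<Sum>p<nl. \<Sum>k<nd. (A p q k)\<^sup>2) = (\<Sum>p<nl. \<Sum>q<m. \<Sum>k<nd. (A p q k)\<^sup>2)"
    by (rule sum.swap)
  also have "\<dots> = (frob3 nl m nd A)\<^sup>2"
    unfolding frob3_def by (rule real_sqrt_pow2[symmetric]) (intro sum_nonneg, simp)
  finally have "sqrt (\<Sum>q<m. (\<Sum>p<nl. \<Sum>k<nd. A p q k * f p k)\<^sup>2) \<le> sqrt ((frob3 nl m nd A)\<^sup>2 * F)"
    by (rule real_sqrt_le_mono)
  also have "\<dots> = frob3 nl m nd A * sqrt F"
    by (simp add: real_sqrt_mult frob3_nonneg)
  finally show ?thesis unfolding vnorm2_def F_def .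
qed

lemma kan_layer_param_diff:
  assumes bounded: "\<And>k y. k < nd \<Longrightarrow> \<bar>b k y\<bar> \<le> B" and B: "0 \<le> B"
  shows "vnorm2 m (\<lambda>q. kan_layer b nd nl A z q - kan_layer b nd nl A' z q)
    \<le> frob3 nl m nd (\<lambda>p q k. A p q k - A' p q k) * (B * sqrt (real nl * real nd))"
proof -
  have "(b k y)\<^sup>2 \<le> B\<^sup>2" if "k < nd" for k y
    using bounded[OF that, of y] B by (simp add: abs_le_square_iff[symmetric])
  then have "(\<Sum>p<nl. \<Sum>k<nd. (b k (z p))\<^sup>2) \<le> (\<Sum>p<nl. \<Sum>k<nd. B\<^sup>2)"
    by (intro sum_mono) simp
  then have "sqrt (\<Sum>p<nl. \<Sum>k<nd. (b k (z p))\<^sup>2) \<le> sqrt ((B * sqrt (real nl * real nd))\<^sup>2)"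
    by (intro real_sqrt_le_mono) (simp add: power_mult_distrib mult_ac)
  also have "\<dots> = B * sqrt (real nl * real nd)"
    using B by simp
  finally have feature_bound: "sqrt (\<Sum>p<nl. \<Sum>k<nd. (b k (z p))\<^sup>2) \<le> B * sqrt (real nl * real nd)" .
  have "(\<lambda>q. kan_layer b nd nl A z q - kan_layer b nd nl A' z q)
      = (\<lambda>q. \<Sum>p<nl. \<Sum>k<nd. (A p q k - A' p q k) * b k (z p))"
    unfolding kan_layer_def by (simp add: fun_eq_iff sum_subtractf left_diff_distrib)
  then have "vnorm2 m (\<lambda>q. kan_layer b nd nl A z q - kan_layer b nd nl A' z q)
      \<le> frob3 nl m nd (\<lambda>p q k. A p q k - A' p q k) * sqrt (\<Sum>p<nl. \<Sum>k<nd. (b k (z p))\<^sup>2)"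
    using vnorm2_contraction_le by simp
  also have "\<dots> \<le> frob3 nl m nd (\<lambda>p q k. A p q k - A' p q k) * (B * sqrt (real nl * real nd))"
    using feature_bound frob3_nonneg by (rule mult_left_mono)
  finally show ?thesis .
qed

lemma kan_layer_lipschitz:
  assumes lip: "\<And>k. k < nd \<Longrightarrow> Lb-lipschitz_on UNIV (b k)" and Lb: "0 \<le> Lb"
  shows "vnorm2 m (\<lambda>q. kan_layer b nd nl A z q - kan_layer b nd nl A z' q)
    \<le> frob3 nl m nd A * (Lb * sqrt (real nd)) * vnorm2 nl (\<lambda>p. z p - z' p)"
proof -
  have "(b k (z p) - b k (z' p))\<^sup>2 \<le> Lb\<^sup>2 * (z p - z' p)\<^sup>2" if "k < nd" for k p
  proof -
    have "\<bar>b k (z p) - b k (z' p)\<bar> \<le> Lb * \<bar>z p - z' p\<bar>"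
      using lipschitz_onD[OF lip[OF that]] by (simp add: dist_real_def)
    then show ?thesis by (metis abs_ge_zero power2_abs power_mono power_mult_distrib)
  qed
  then have "(\<Sum>p<nl. \<Sum>k<nd. (b k (z p) - b k (z' p))\<^sup>2) \<le> (\<Sum>p<nl. \<Sum>k<nd. Lb\<^sup>2 * (z p - z' p)\<^sup>2)"
    by (intro sum_mono) simp
  also have "\<dots> = (Lb * sqrt (real nd) * vnorm2 nl (\<lambda>p. z p - z' p))\<^sup>2"
    unfolding vnorm2_def by (simp add: power_mult_distrib sum_distrib_left sum_nonneg mult_ac)
  finally have "sqrt (\<Sum>p<nl. \<Sum>k<nd. (b k (z p) - b k (z' p))\<^sup>2)
      \<le> sqrt ((Lb * sqrt (real nd) * vnorm2 nl (\<lambda>p. z p - z' p))\<^sup>2)"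
    by (rule real_sqrt_le_mono)
  then have feature_bound: "sqrt (\<Sum>p<nl. \<Sum>k<nd. (b k (z p) - b k (z' p))\<^sup>2)
      \<le> Lb * sqrt (real nd) * vnorm2 nl (\<lambda>p. z p - z' p)"
    using Lb vnorm2_nonneg[of nl "\<lambda>p. z p - z' p"] by simp
  have "(\<lambda>q. kan_layer b nd nl A z q - kan_layer b nd nl A z' q)
      = (\<lambda>q. \<Sum>p<nl. \<Sum>k<nd. A p q k * (b k (z p) - b k (z' p)))"
    unfolding kan_layer_def by (simp add: fun_eq_iff sum_subtractf right_diff_distrib)
  then have "vnorm2 m (\<lambda>q. kan_layer b nd nl A z q - kan_layer b nd nl A z' q)
      \<le> frob3 nl m nd A * sqrt (\<Sum>p<nl. \<Sum>k<nd. (b k (z p) - b k (z' p))\<^sup>2)"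
    using vnorm2_contraction_le by simp
  also have "\<dots> \<le> frob3 nl m nd A * (Lb * sqrt (real nd) * vnorm2 nl (\<lambda>p. z p - z' p))"
    using feature_bound frob3_nonneg by (rule mult_left_mono)
  finally show ?thesis by (simp add: mult.assoc)
qed

definition kan_hybrid :: "nat \<Rightarrow> (nat \<Rightarrow> tensor3) \<Rightarrow> (nat \<Rightarrow> tensor3) \<Rightarrow> nat \<Rightarrow> tensor3" where
  "kan_hybrid J A' A = (\<lambda>l. if l \<le> J then A' l else A l)"

lemma kan_z_cong:
  assumes "\<And>l. 1 \<le> l \<Longrightarrow> l \<le> j \<Longrightarrow> A l = A' l"
  shows "kan_z b nd n A x j = kan_z b nd n A' x j"
  using assms by (induction j) auto

lemma kan_hybrid_step_bound:
  assumes bounded: "\<And>k y. k < nd \<Longrightarrow> \<bar>b k y\<bar> \<le> B" and B: "0 \<le> B"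
    and lip: "\<And>k. k < nd \<Longrightarrow> Lb-lipschitz_on UNIV (b k)" and Lb: "0 \<le> Lb"
    and A_bound: "\<And>l. l \<in> {1..L} \<Longrightarrow> frob3 (n l) (n (Suc l)) nd (A l) \<le> M"
    and j: "1 \<le> j" "j \<le> m" "m \<le> L"
  shows "vnorm2 (n (Suc m)) (\<lambda>q. kan_z b nd n (kan_hybrid j A' A) x m q - kan_z b nd n (kan_hybrid (j - 1) A' A) x m q)
    \<le> (M * Lb * sqrt (real nd)) ^ (m - j) * (B * sqrt (real (n j) * real nd))
      * frob3 (n j) (n (Suc j)) nd (\<lambda>p q k. A' j p q k - A j p q k)"
  using j(2)
proof (induction m rule: dec_induct)
  case base
  obtain i where i: "j = Suc i" using j(1) by (cases j) auto
  have "kan_z b nd n (kan_hybrid j A' A) x i = kan_z b nd n (kan_hybrid i A' A) x i"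
    unfolding i kan_hybrid_def by (rule kan_z_cong) auto
  then show ?case
    using kan_layer_param_diff[OF bounded B, where m = "n (Suc j)" and nl = "n j" and A = "A' j" and A' = "A j"]
    unfolding i by (simp add: kan_hybrid_def mult_ac)
next
  case (step i)
  let ?z1 = "kan_z b nd n (kan_hybrid j A' A) x i" and ?z0 = "kan_z b nd n (kan_hybrid (j - 1) A' A) x i"
  have A_m: "frob3 (n (Suc i)) (n (Suc (Suc i))) nd (A (Suc i)) \<le> M"
    using A_bound step j(3) by auto
  have M: "0 \<le> M" using frob3_nonneg A_m by (rule order_trans)
  have "kan_hybrid j A' A (Suc i) = A (Suc i)" "kan_hybrid (j - 1) A' A (Suc i) = A (Suc i)"
    using step.hyps by (auto simp: kan_hybrid_def)
  then have "vnorm2 (n (Suc (Suc i))) (\<lambda>q. kan_z b nd n (kan_hybrid j A' A) x (Suc i) q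
        - kan_z b nd n (kan_hybrid (j - 1) A' A) x (Suc i) q)
      = vnorm2 (n (Suc (Suc i))) (\<lambda>q. kan_layer b nd (n (Suc i)) (A (Suc i)) ?z1 q
        - kan_layer b nd (n (Suc i)) (A (Suc i)) ?z0 q)"
    by (simp only: kan_z.simps)
  also have "\<dots> \<le> frob3 (n (Suc i)) (n (Suc (Suc i))) nd (A (Suc i)) * (Lb * sqrt (real nd))
      * vnorm2 (n (Suc i)) (\<lambda>q. ?z1 q - ?z0 q)"
    by (rule kan_layer_lipschitz[OF lip Lb])
  also have "\<dots> \<le> M * (Lb * sqrt (real nd)) * vnorm2 (n (Suc i)) (\<lambda>q. ?z1 q - ?z0 q)"
    using A_m Lb vnorm2_nonneg by (intro mult_right_mono) simp_all
  also have "\<dots> \<le> M * (Lb * sqrt (real nd)) * ((M * Lb * sqrt (real nd)) ^ (i - j)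
      * (B * sqrt (real (n j) * real nd)) * frob3 (n j) (n (Suc j)) nd (\<lambda>p q k. A' j p q k - A j p q k))"
    using step.IH M Lb by (intro mult_left_mono) auto
  finally show ?case
    using step.hyps by (simp add: Suc_diff_le mult_ac)
qed

lemma kan_perturbation_bound:
  assumes bounded: "\<And>k y. k < nd \<Longrightarrow> \<bar>b k y\<bar> \<le> B" and B: "0 \<le> B"
    and lip: "\<And>k. k < nd \<Longrightarrow> Lb-lipschitz_on UNIV (b k)" and Lb: "0 \<le> Lb"
    and A_bound: "\<And>l. l \<in> {1..L} \<Longrightarrow> frob3 (n l) (n (Suc l)) nd (A l) \<le> M"
  shows "vnorm2 (n (Suc L)) (\<lambda>q. kan L b nd n A' x q - kan L b nd n A x q)
    \<le> (\<Sum>l = 1..L. (M * Lb * sqrt (real nd)) ^ (L - l) * (B * sqrt (real (n l) * real nd))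
        * frob3 (n l) (n (Suc l)) nd (\<lambda>p q k. A' l p q k - A l p q k))"
proof -
  define out where "out J = kan_z b nd n (kan_hybrid J A' A) x L" for J
  define c where "c l = (M * Lb * sqrt (real nd)) ^ (L - l) * (B * sqrt (real (n l) * real nd))
      * frob3 (n l) (n (Suc l)) nd (\<lambda>p q k. A' l p q k - A l p q k)" for l
  have telescope: "vnorm2 (n (Suc L)) (\<lambda>q. out J q - out 0 q) \<le> (\<Sum>l = 1..J. c l)" if "J \<le> L" for J
    using that
  proof (induction J)
    case 0
    then show ?case by (simp add: vnorm2_def)
  next
    case (Suc J)
    have "vnorm2 (n (Suc L)) (\<lambda>q. out (Suc J) q - out 0 q)
        \<le> vnorm2 (n (Suc L)) (\<lambda>q. out (Suc J) q - out J q) + vnorm2 (n (Suc L)) (\<lambda>q. out J q - out 0 q)"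
      using vnorm2_triangle[of _ "\<lambda>q. out (Suc J) q - out J q" "\<lambda>q. out J q - out 0 q"] by simp
    also have "\<dots> \<le> c (Suc J) + (\<Sum>l = 1..J. c l)"
      using kan_hybrid_step_bound[where b = b and nd = nd and n = n and L = L and A = A and A' = A'
          and x = x and j = "Suc J" and m = L, OF bounded B lip Lb A_bound] Suc
      unfolding out_def c_def by (intro add_mono) auto
    finally show ?case by simp
  qed
  have "out L = kan L b nd n A' x" "out 0 = kan L b nd n A x"
    unfolding out_def kan_def kan_hybrid_def by (rule kan_z_cong, simp)+
  with telescope[OF order_refl] show ?thesis unfolding c_def by simp
qed

lemma bchoice4:
  assumes "\<forall>x\<in>S. \<exists>a b c d. P x a b c d"
  shows "\<exists>a b c d. \<forall>x\<in>S. P x (a x) (b x) (c x) (d x)"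
proof -
  from assms have "\<forall>x\<in>S. \<exists>t. P x (fst t) (fst (snd t)) (fst (snd (snd t))) (snd (snd (snd t)))"
    by force
  from bchoice[OF this] obtain t
    where "\<forall>x\<in>S. P x (fst (t x)) (fst (snd (t x))) (fst (snd (snd (t x)))) (snd (snd (snd (t x))))"
    by blast
  then show ?thesis
    by (intro exI[of _ "\<lambda>x. fst (t x)"] exI[of _ "\<lambda>x. fst (snd (t x))"]
        exI[of _ "\<lambda>x. fst (snd (snd (t x)))"] exI[of _ "\<lambda>x. snd (snd (snd (t x)))"])
qed

lemma kan_tucker_adaptation_bound:
  assumes bounded: "\<And>k z. k < nd \<Longrightarrow> \<bar>b k z\<bar> \<le> B" and B: "0 \<le> B"
    and lip: "\<And>k. k < nd \<Longrightarrow> Lb-lipschitz_on UNIV (b k)" and Lb: "0 \<le> Lb"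
    and tg_bd: "\<And>l. l \<in> {1..L} \<Longrightarrow> frob3 (n l) (n (Suc l)) nd (Atg l) \<le> M"
    and fit: "\<And>l. l \<in> {1..L} \<Longrightarrow> \<exists>G U1 U2 U3. frob3 (n l) (n (Suc l)) nd
      (\<lambda>p q k. tucker (r1 l) (r2 l) (r3 l) G U1 U2 U3 p q k - (Atg l p q k - Apt l p q k)) \<le> \<tau> l"
  shows "\<exists>G U1 U2 U3. \<forall>x. vnorm2 (n (Suc L))
      (\<lambda>q. kan L b nd n (\<lambda>l p q k. Apt l p q k + tucker (r1 l) (r2 l) (r3 l) (G l) (U1 l) (U2 l) (U3 l) p q k) x q
        - kan L b nd n Atg x q)
    \<le> (\<Sum>l = 1..L. (M * Lb * sqrt (real nd)) ^ (L - l) * (B * sqrt (real (n l) * real nd)) * \<tau> l)"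
proof -
  from fit have "\<forall>l\<in>{1..L}. \<exists>G U1 U2 U3. frob3 (n l) (n (Suc l)) nd
      (\<lambda>p q k. tucker (r1 l) (r2 l) (r3 l) G U1 U2 U3 p q k - (Atg l p q k - Apt l p q k)) \<le> \<tau> l"
    by blast
  from bchoice4[OF this] obtain G U1 U2 U3 where G: "\<forall>l\<in>{1..L}. frob3 (n l) (n (Suc l)) nd
      (\<lambda>p q k. tucker (r1 l) (r2 l) (r3 l) (G l) (U1 l) (U2 l) (U3 l) p q k - (Atg l p q k - Apt l p q k)) \<le> \<tau> l"
    by blast
  define Aft where "Aft l p q k = Apt l p q k + tucker (r1 l) (r2 l) (r3 l) (G l) (U1 l) (U2 l) (U3 l) p q k"
    for l p q k
  have "vnorm2 (n (Suc L)) (\<lambda>q. kan L b nd n Aft x q - kan L b nd n Atg x q)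
      \<le> (\<Sum>l = 1..L. (M * Lb * sqrt (real nd)) ^ (L - l) * (B * sqrt (real (n l) * real nd)) * \<tau> l)" for x
  proof -
    have "vnorm2 (n (Suc L)) (\<lambda>q. kan L b nd n Aft x q - kan L b nd n Atg x q)
      \<le> (\<Sum>l = 1..L. (M * Lb * sqrt (real nd)) ^ (L - l) * (B * sqrt (real (n l) * real nd))
          * frob3 (n l) (n (Suc l)) nd (\<lambda>p q k. Aft l p q k - Atg l p q k))"
      by (rule kan_perturbation_bound[where b = b and nd = nd and n = n and A = Atg, OF bounded B lip Lb tg_bd])
    also have "\<dots> \<le> (\<Sum>l = 1..L. (M * Lb * sqrt (real nd)) ^ (L - l) * (B * sqrt (real (n l) * real nd)) * \<tau> l)"
    proof (rule sum_mono)
      fix l assume l: "l \<in> {1..L}"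
      have "0 \<le> M" using frob3_nonneg tg_bd[OF l] by (rule order_trans)
      then show "(M * Lb * sqrt (real nd)) ^ (L - l) * (B * sqrt (real (n l) * real nd))
          * frob3 (n l) (n (Suc l)) nd (\<lambda>p q k. Aft l p q k - Atg l p q k)
        \<le> (M * Lb * sqrt (real nd)) ^ (L - l) * (B * sqrt (real (n l) * real nd)) * \<tau> l"
        using G l B Lb by (intro mult_left_mono) (auto simp: Aft_def algebra_simps)
    qed
    finally show ?thesis .
  qed
  then show ?thesis unfolding Aft_def by blast
qed

theorem theorem1:
  fixes L nd :: nat and n :: "nat \<Rightarrow> nat" and b :: "nat \<Rightarrow> real \<Rightarrow> real"
    and Apt Atg :: "nat \<Rightarrow> nat \<Rightarrow> nat \<Rightarrow> nat \<Rightarrow> real"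
    and B M Lb :: real and r1 r2 r3 :: "nat \<Rightarrow> nat"
  assumes smooth: "\<And>k. k < nd \<Longrightarrow> smooth_fun (b k)"
    and bounded: "\<And>k z. k < nd \<Longrightarrow> \<bar>b k z\<bar> \<le> B"
    and lip: "\<And>k. k < nd \<Longrightarrow> Lb-lipschitz_on UNIV (b k)"
    and Lb_pos: "Lb > 0" and B_pos: "B > 0" and M_pos: "M > 0"
    and tg_bd: "\<And>l. l \<in> {1..L} \<Longrightarrow> frob3 (n l) (n (Suc l)) nd (Atg l) \<le> M"
    and pt_bd: "\<And>l. l \<in> {1..L} \<Longrightarrow> frob3 (n l) (n (Suc l)) nd (Apt l) \<le> M"
    and r1: "\<And>l. l \<in> {1..L} \<Longrightarrow> 1 \<le> r1 l \<and> r1 l \<le> n l"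
    and r2: "\<And>l. l \<in> {1..L} \<Longrightarrow> 1 \<le> r2 l \<and> r2 l \<le> n (Suc l)"
    and r3: "\<And>l. l \<in> {1..L} \<Longrightarrow> 1 \<le> r3 l \<and> r3 l \<le> nd"
  shows "\<exists>(G :: nat \<Rightarrow> nat \<Rightarrow> nat \<Rightarrow> nat \<Rightarrow> real) (U1 :: nat \<Rightarrow> nat \<Rightarrow> nat \<Rightarrow> real)
           (U2 :: nat \<Rightarrow> nat \<Rightarrow> nat \<Rightarrow> real) (U3 :: nat \<Rightarrow> nat \<Rightarrow> nat \<Rightarrow> real).
    (\<forall>x :: nat \<Rightarrow> real.
      vnorm2 (n (Suc L))
        (\<lambda>q. kan L b nd n
               (\<lambda>l p q k. Apt l p q k + tucker (r1 l) (r2 l) (r3 l) (G l) (U1 l) (U2 l) (U3 l) p q k) x q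
             - kan L b nd n Atg x q)
      \<le> (\<Sum>l = 1..L.
          (M * Lb * sqrt (real nd)) ^ (L - l) * (B * sqrt (real (n l) * real nd)) *
          sqrt ((\<Sum>r = Suc (r1 l)..n l.
                   (sigma r (unfold1 (n l) (n (Suc l)) nd (\<lambda>p q k. Atg l p q k - Apt l p q k)))\<^sup>2)
              + (\<Sum>r = Suc (r2 l)..n (Suc l).
                   (sigma r (unfold2 (n l) (n (Suc l)) nd (\<lambda>p q k. Atg l p q k - Apt l p q k)))\<^sup>2)
              + (\<Sum>r = Suc (r3 l)..nd.
                   (sigma r (unfold3 (n l) (n (Suc l)) nd (\<lambda>p q k. Atg l p q k - Apt l p q k)))\<^sup>2))))"
  by (rule kan_tucker_adaptation_bound[where b = b and nd = nd and n = n and L = L and Atg = Atg,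
        OF bounded _ lip _ tg_bd])
    (use B_pos Lb_pos r1 r2 r3 in \<open>auto intro!: tucker_truncation_error\<close>)

end
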